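(* For any discrete memoryless channel $\mathcal W$ from a finite set $\mathcal X$ to a finite set $\mathcal Y$, $\lim_{\alpha\to1}U_\alpha(\mathcal W)=U(\mathcal W)$ (both one-sided limits exist and equal $U(\mathcal W)$).
   Context: $D(P\|Q)=\sum P\log(P/Q)$ ($0\log(0/q)=0$; $+\infty$ if $P\not\ll Q$); for $\alpha\in(0,1)\cup(1,\infty)$, $D_\alpha(P\|Q)=\frac1{\alpha-1}\log\sum_{x:P(x)>0}P(x)^\alpha Q(x)^{1-\alpha}$ ($+\infty$ if $\alpha>1$ and $P\not\ll Q$). With $P_{XY}(x,y)=P_X(x)\mathcal W(y|x)$: $U(\mathcal W)=\max_{P_X}\min_{Q_Y}D(P_X\times Q_Y\|P_{XY})$ and $U_\alpha(\mathcal W)=\max_{P_X}\min_{Q_Y}D_\alpha(P_X\times Q_Y\|P_{XY})$. *)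

theory Defs
  imports "HOL-Analysis.Analysis"
begin

definition is_dist :: "('a::finite \<Rightarrow> real) \<Rightarrow> bool" where
  "is_dist P \<longleftrightarrow> (\<forall>a. 0 \<le> P a) \<and> (\<Sum>a\<in>UNIV. P a) = 1"

text \<open>Discrete memoryless channel: a stochastic matrix W x y = W(y|x).\<close>
definition is_channel :: "('x::finite \<Rightarrow> 'y::finite \<Rightarrow> real) \<Rightarrow> bool" where
  "is_channel W \<longleftrightarrow> (\<forall>x. is_dist (W x))"

definition KL :: "('a::finite \<Rightarrow> real) \<Rightarrow> ('a \<Rightarrow> real) \<Rightarrow> ereal" where
  "KL P Q = (if (\<forall>a. P a > 0 \<longrightarrow> Q a > 0)
     then ereal (\<Sum>a\<in>UNIV. if P a = 0 then 0 else P a * ln (P a / Q a))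
     else \<infinity>)"

text \<open>Renyi divergence of order alpha (natural logarithm). For alpha < 1 a vanishing sum
  gives log 0 = -\<infinity>, hence the value +\<infinity>; for alpha > 1 the value is +\<infinity> unless P << Q.\<close>
definition renyi :: "real \<Rightarrow> ('a::finite \<Rightarrow> real) \<Rightarrow> ('a \<Rightarrow> real) \<Rightarrow> ereal" where
  "renyi \<alpha> P Q =
    (let s = (\<Sum>a\<in>{a. P a > 0}. P a powr \<alpha> * Q a powr (1 - \<alpha>)) in
     if \<alpha> < 1 then (if s = 0 then \<infinity> else ereal (ln s / (\<alpha> - 1)))
     else (if (\<forall>a. P a > 0 \<longrightarrow> Q a > 0) then ereal (ln s / (\<alpha> - 1)) else \<infinity>))"

definition joint :: "('x::finite \<Rightarrow> real) \<Rightarrow> ('x \<Rightarrow> 'y::finite \<Rightarrow> real) \<Rightarrow> ('x \<times> 'y \<Rightarrow> real)" where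
  "joint P W = (\<lambda>(x, y). P x * W x y)"

definition prod_dist :: "('x::finite \<Rightarrow> real) \<Rightarrow> ('y::finite \<Rightarrow> real) \<Rightarrow> ('x \<times> 'y \<Rightarrow> real)" where
  "prod_dist P Q = (\<lambda>(x, y). P x * Q y)"

definition U :: "('x::finite \<Rightarrow> 'y::finite \<Rightarrow> real) \<Rightarrow> ereal" where
  "U W = (SUP P\<in>{P. is_dist P}. INF Q\<in>{Q. is_dist Q}. KL (prod_dist P Q) (joint P W))"

definition U_renyi :: "real \<Rightarrow> ('x::finite \<Rightarrow> 'y::finite \<Rightarrow> real) \<Rightarrow> ereal" where
  "U_renyi \<alpha> W = (SUP P\<in>{P. is_dist P}. INF Q\<in>{Q. is_dist Q}. renyi \<alpha> (prod_dist P Q) (joint P W))"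

end

theory Submission
  imports Defs
begin

text \<open>For fixed P the inner minimisation of the relative entropy is explicit: by Gibbs'
  inequality D(P \<times> Q || P_XY) is minimised by Q proportional to exp (E_P ln W(y|\<cdot>)) on the outputs
  reachable from every input in the support of P, with value -ln of the normalising mass.
  Since D_\<alpha> \<le> D for \<alpha> < 1 and D \<le> D_\<alpha> for \<alpha> > 1, it remains to bound U_\<alpha> from below on
  the left and from above on the right.  For \<alpha> < 1, Hoelder's inequality bounds
  D_\<alpha>(P \<times> Q || P_XY) below by -ln \<Sum>_y (\<Sum>_x P(x) W(y|x)^(1-\<alpha>))^(1/(1-\<alpha>)) for every Q, and this
  power-mean mass tends to the geometric mass as \<alpha> \<rightarrow> 1.  For \<alpha> > 1 we evaluate D_\<alpha> at the
  minimiser of D: a second-order bound on the log-moment generating function shows that it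
  exceeds D by at most (\<alpha> - 1) B^2, where B bounds the log-likelihood ratio uniformly in P.\<close>

lemma exp_le_one_plus_quadratic:
  fixes t :: real
  assumes "\<bar>t\<bar> \<le> 1"
  shows "exp t \<le> 1 + t + t\<^sup>2"
proof (cases "0 \<le> t")
  case True
  then show ?thesis using exp_bound[of t] assms by auto
next
  case False
  define s where "s = - t"
  have s: "0 \<le> s" "s \<le> 1" using False assms by (auto simp: s_def)
  have "1 - s + s\<^sup>2 = (s - 1/2)\<^sup>2 + 3/4" by (simp add: power2_eq_square algebra_simps)
  then have pos: "0 < 1 - s + s\<^sup>2" using zero_le_power2[of "s - 1/2"] by linarith
  have "(1 - s + s\<^sup>2) * (1 + s + s\<^sup>2/2) = 1 + s\<^sup>2/2 + s^3/2 + s^4/2"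
    by (simp add: field_simps power2_eq_square power3_eq_cube power4_eq_xxxx)
  then have "1 \<le> (1 - s + s\<^sup>2) * (1 + s + s\<^sup>2/2)" using s by simp
  also have "\<dots> \<le> (1 - s + s\<^sup>2) * exp s"
    using exp_lower_Taylor_quadratic[OF s(1)] pos by (intro mult_left_mono) auto
  finally have "exp (- s) \<le> 1 - s + s\<^sup>2" by (simp add: exp_minus field_simps)
  then show ?thesis by (simp add: s_def)
qed

lemma exp_sum_le_sum_exp:
  fixes w z :: "'a \<Rightarrow> real"
  assumes "finite I" "\<And>i. i \<in> I \<Longrightarrow> 0 \<le> w i" "sum w I = 1"
  shows "exp (\<Sum>i\<in>I. w i * z i) \<le> (\<Sum>i\<in>I. w i * exp (z i))"
proof -
  have "I \<noteq> {}" using assms(3) by auto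
  from convex_on_sum[OF assms(1) this exp_convex assms(3) assms(2), of z]
  show ?thesis by simp
qed

lemma ln_sum_exp_ge:
  fixes w z :: "'a \<Rightarrow> real"
  assumes "finite I" "\<And>i. i \<in> I \<Longrightarrow> 0 \<le> w i" "sum w I = 1"
  shows "t * (\<Sum>i\<in>I. w i * z i) \<le> ln (\<Sum>i\<in>I. w i * exp (t * z i))"
proof -
  have "exp (t * (\<Sum>i\<in>I. w i * z i)) \<le> (\<Sum>i\<in>I. w i * exp (t * z i))" (is "exp ?K \<le> ?S")
    using exp_sum_le_sum_exp[OF assms, of "\<lambda>i. t * z i"] by (simp add: sum_distrib_left algebra_simps)
  moreover from this have "0 < ?S" using exp_gt_zero[of ?K] by linarith
  ultimately show ?thesis by (simp add: ln_ge_iff)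
qed

lemma ln_sum_exp_le_quadratic:
  fixes w z :: "'a \<Rightarrow> real"
  assumes I: "finite I" and w: "\<And>i. i \<in> I \<Longrightarrow> 0 \<le> w i" "sum w I = 1"
    and z: "\<And>i. i \<in> I \<Longrightarrow> 0 < w i \<Longrightarrow> \<bar>z i\<bar> \<le> B" and t: "\<bar>t\<bar> * B \<le> 1"
  shows "ln (\<Sum>i\<in>I. w i * exp (t * z i)) \<le> t * (\<Sum>i\<in>I. w i * z i) + t\<^sup>2 * B\<^sup>2"
proof -
  have "w i * exp (t * z i) \<le> w i * (1 + t * z i + t\<^sup>2 * B\<^sup>2)" if i: "i \<in> I" for i
  proof (cases "w i = 0")
    case False
    then have "\<bar>t * z i\<bar> \<le> \<bar>t\<bar> * B"
      using w(1)[OF i] z[OF i] by (simp add: abs_mult mult_left_mono)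
    then have "\<bar>t * z i\<bar> \<le> 1" "(t * z i)\<^sup>2 \<le> t\<^sup>2 * B\<^sup>2"
      using t power_mono[of "\<bar>t * z i\<bar>" "\<bar>t\<bar> * B" 2] by (simp_all add: power_mult_distrib)
    then have "exp (t * z i) \<le> 1 + t * z i + t\<^sup>2 * B\<^sup>2"
      using exp_le_one_plus_quadratic by fastforce
    then show ?thesis using w(1)[OF i] by (intro mult_left_mono) auto
  qed simp
  then have "(\<Sum>i\<in>I. w i * exp (t * z i)) \<le> (\<Sum>i\<in>I. w i * (1 + t * z i + t\<^sup>2 * B\<^sup>2))"
    by (rule sum_mono)
  also have "\<dots> = 1 + t * (\<Sum>i\<in>I. w i * z i) + t\<^sup>2 * B\<^sup>2"
    using w(2) by (simp add: algebra_simps sum.distrib sum_distrib_left flip: sum_distrib_right)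
  moreover have "0 < (\<Sum>i\<in>I. w i * exp (t * z i))"
    using exp_sum_le_sum_exp[OF I w, of "\<lambda>i. t * z i"] exp_gt_zero by (meson less_le_trans)
  then have "ln (\<Sum>i\<in>I. w i * exp (t * z i)) \<le> (\<Sum>i\<in>I. w i * exp (t * z i)) - 1"
    by (rule ln_le_minus_one)
  ultimately show ?thesis by linarith
qed

text \<open>At c = 0 both sides vanish, the right-hand one because ln 0 = 0 in HOL.\<close>

lemma powr_inverse_le_div_neg_ln:
  fixes b c :: real
  assumes c: "0 \<le> c" "c < 1" and b: "0 < b"
  shows "c powr (1 / b) \<le> b / - ln c"
proof (cases "c = 0")
  case False
  define k where "k = - ln c"
  have k: "0 < k" using False c by (simp add: k_def)
  have "k / b \<le> exp (k / b)" using exp_ge_add_one_self[of "k / b"] by linarith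
  have "c powr (1 / b) = 1 / exp (k / b)"
    using False c by (simp add: powr_def k_def exp_minus inverse_eq_divide)
  also have "\<dots> \<le> 1 / (k / b)"
    using \<open>k / b \<le> exp (k / b)\<close> k b by (intro divide_left_mono) auto
  finally show ?thesis by (simp add: k_def)
qed simp

lemma sum_powr_mult_le_sum_powr:
  fixes q a :: "'a \<Rightarrow> real"
  assumes I: "finite I" and q: "\<And>i. i \<in> I \<Longrightarrow> 0 \<le> q i" "sum q I = 1"
    and a: "\<And>i. i \<in> I \<Longrightarrow> 0 \<le> a i" and b: "0 < b" "b < 1"
  shows "(\<Sum>i\<in>I. q i powr (1 - b) * a i powr b) \<le> (\<Sum>i\<in>I. a i) powr b"
proof (cases "sum a I = 0")
  case True
  then have "\<And>i. i \<in> I \<Longrightarrow> a i = 0" using sum_nonneg_eq_0_iff[OF I] a by blast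
  then show ?thesis by simp
next
  case False
  define T where "T = sum a I"
  have T: "0 < T" using False a sum_nonneg[of I a] by (force simp: T_def)
  have young: "q i powr (1 - b) * (a i / T) powr b \<le> (1 - b) * q i + b * (a i / T)" if i: "i \<in> I" for i
  proof (cases "q i = 0 \<or> a i = 0")
    case False
    then show ?thesis using Youngs_inequality_0[of "1 - b" b "q i" "a i / T"] q(1)[OF i] a[OF i] T b
      by fastforce
  qed (use b q(1)[OF i] a[OF i] T in auto)
  have "(\<Sum>i\<in>I. q i powr (1 - b) * a i powr b) = T powr b * (\<Sum>i\<in>I. q i powr (1 - b) * (a i / T) powr b)"
    using T a by (simp add: powr_divide sum_distrib_left)
  also have "\<dots> \<le> T powr b * (\<Sum>i\<in>I. (1 - b) * q i + b * (a i / T))"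
    using young by (intro mult_left_mono sum_mono) auto
  also have "(\<Sum>i\<in>I. (1 - b) * q i + b * (a i / T)) = 1"
    using q(2) T by (simp add: sum.distrib T_def flip: sum_distrib_left sum_divide_distrib)
  finally show ?thesis by (simp add: T_def)
qed

lemma is_dist_nonneg: "is_dist P \<Longrightarrow> 0 \<le> P a"
  unfolding is_dist_def by auto

lemma is_dist_sum: "is_dist P \<Longrightarrow> (\<Sum>a\<in>UNIV. P a) = 1"
  unfolding is_dist_def by auto

lemma is_dist_pos_iff: "is_dist P \<Longrightarrow> 0 < P a \<longleftrightarrow> P a \<noteq> 0"
  using is_dist_nonneg[of P a] by auto

lemma is_dist_ex_pos:
  assumes "is_dist (P :: 'a::finite \<Rightarrow> real)"
  obtains a where "0 < P a"
  using is_dist_sum[OF assms] is_dist_pos_iff[OF assms] by (metis sum.neutral zero_neq_one)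

lemma is_dist_le_one:
  assumes "is_dist (P :: 'a::finite \<Rightarrow> real)"
  shows "P a \<le> 1"
  using member_le_sum[of a UNIV P] is_dist_nonneg[OF assms] is_dist_sum[OF assms] by simp

lemma is_dist_uniform: "is_dist (\<lambda>_::'a::finite. 1 / real CARD('a))"
  unfolding is_dist_def by simp

lemma sum_UNIV_prod:
  "(\<Sum>a\<in>UNIV. g a) = (\<Sum>x\<in>UNIV. \<Sum>y\<in>UNIV. g (x :: 'a::finite, y :: 'b::finite))"
  by (simp add: sum.cartesian_product flip: UNIV_Times_UNIV)

lemma is_dist_prod_dist:
  assumes P: "is_dist P" and Q: "is_dist Q"
  shows "is_dist (prod_dist P Q)"
  unfolding is_dist_def sum_UNIV_prod
  using is_dist_nonneg[OF P] is_dist_nonneg[OF Q] is_dist_sum[OF P] is_dist_sum[OF Q]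
  by (simp add: prod_dist_def sum_product[symmetric])

lemma KL_eq_sum:
  assumes "\<And>a. 0 < p a \<Longrightarrow> 0 < q a"
  shows "KL p q = ereal (\<Sum>a\<in>UNIV. p a * ln (p a / q a))"
  using assms unfolding KL_def by (auto intro!: sum.cong)

lemma renyi_eq_ln_sum_exp:
  fixes p q :: "'a::finite \<Rightarrow> real"
  assumes p: "is_dist p" and ac: "\<And>a. 0 < p a \<Longrightarrow> 0 < q a" and \<alpha>: "\<alpha> \<noteq> 1"
  shows "renyi \<alpha> p q = ereal (ln (\<Sum>a\<in>UNIV. p a * exp ((\<alpha> - 1) * ln (p a / q a))) / (\<alpha> - 1))"
proof -
  have summand: "p a powr \<alpha> * q a powr (1 - \<alpha>) = p a * exp ((\<alpha> - 1) * ln (p a / q a))" if "0 < p a" for a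
  proof -
    have "p a powr \<alpha> * q a powr (1 - \<alpha>) = exp (\<alpha> * ln (p a) + (1 - \<alpha>) * ln (q a))"
      using that ac[OF that] by (simp add: powr_def exp_add)
    also have "\<alpha> * ln (p a) + (1 - \<alpha>) * ln (q a) = ln (p a) + (\<alpha> - 1) * ln (p a / q a)"
      using that ac[OF that] by (simp add: ln_div algebra_simps)
    finally show ?thesis using that by (simp add: exp_add)
  qed
  define s where "s = (\<Sum>a\<in>UNIV. p a * exp ((\<alpha> - 1) * ln (p a / q a)))"
  have "(\<Sum>a\<in>{a. 0 < p a}. p a powr \<alpha> * q a powr (1 - \<alpha>)) = (\<Sum>a\<in>{a. 0 < p a}. p a * exp ((\<alpha> - 1) * ln (p a / q a)))"
    using summand by (intro sum.cong) auto
  also have "\<dots> = s"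
    unfolding s_def using is_dist_pos_iff[OF p] by (intro sum.mono_neutral_left) auto
  finally have s: "(\<Sum>a\<in>{a. 0 < p a}. p a powr \<alpha> * q a powr (1 - \<alpha>)) = s" .
  have "0 < s"
    using exp_sum_le_sum_exp[of UNIV p "\<lambda>a. (\<alpha> - 1) * ln (p a / q a)"] is_dist_nonneg[OF p] is_dist_sum[OF p]
    by (simp add: s_def) (meson exp_gt_zero less_le_trans)
  then show ?thesis using ac \<alpha> unfolding renyi_def Let_def s s_def by auto
qed

lemma KL_le_renyi:
  assumes p: "is_dist p" and \<alpha>: "1 < \<alpha>"
  shows "KL p q \<le> renyi \<alpha> p q"
proof (cases "\<forall>a. 0 < p a \<longrightarrow> 0 < q a")
  case True
  then show ?thesis
    using ln_sum_exp_ge[where I = UNIV and w = p and z = "\<lambda>a. ln (p a / q a)" and t = "\<alpha> - 1"] is_dist_nonneg[OF p] is_dist_sum[OF p] \<alpha>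
    by (simp add: KL_eq_sum renyi_eq_ln_sum_exp[OF p] pos_le_divide_eq mult.commute)
next
  case False
  then show ?thesis using \<alpha> unfolding renyi_def Let_def by auto
qed

lemma renyi_le_KL:
  assumes p: "is_dist p" and \<alpha>: "\<alpha> < 1"
  shows "renyi \<alpha> p q \<le> KL p q"
proof (cases "\<forall>a. 0 < p a \<longrightarrow> 0 < q a")
  case True
  then show ?thesis
    using ln_sum_exp_ge[where I = UNIV and w = p and z = "\<lambda>a. ln (p a / q a)" and t = "\<alpha> - 1"] is_dist_nonneg[OF p] is_dist_sum[OF p] \<alpha>
    by (simp add: KL_eq_sum renyi_eq_ln_sum_exp[OF p] neg_divide_le_eq mult.commute)
next
  case False
  then show ?thesis unfolding KL_def by auto
qed

lemma renyi_le_KL_add_quadratic: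
  fixes p q :: "'a::finite \<Rightarrow> real"
  assumes p: "is_dist p" and ac: "\<And>a. 0 < p a \<Longrightarrow> 0 < q a"
    and B: "\<And>a. 0 < p a \<Longrightarrow> \<bar>ln (p a / q a)\<bar> \<le> B" and \<alpha>: "1 < \<alpha>" "(\<alpha> - 1) * B \<le> 1"
  shows "renyi \<alpha> p q \<le> KL p q + ereal ((\<alpha> - 1) * B\<^sup>2)"
proof -
  define d where "d = \<alpha> - 1"
  define K where "K = (\<Sum>a\<in>UNIV. p a * ln (p a / q a))"
  have "ln (\<Sum>a\<in>UNIV. p a * exp (d * ln (p a / q a))) \<le> d * K + d\<^sup>2 * B\<^sup>2"
    unfolding K_def using is_dist_nonneg[OF p] is_dist_sum[OF p] B \<alpha>
    by (intro ln_sum_exp_le_quadratic) (auto simp: d_def)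
  also have "d * K + d\<^sup>2 * B\<^sup>2 = (K + d * B\<^sup>2) * d" by (simp add: power2_eq_square algebra_simps)
  finally have "ln (\<Sum>a\<in>UNIV. p a * exp (d * ln (p a / q a))) / d \<le> K + d * B\<^sup>2"
    using \<alpha> by (simp add: d_def pos_divide_le_eq)
  then show ?thesis
    using \<alpha> by (simp add: KL_eq_sum[OF ac] renyi_eq_ln_sum_exp[OF p ac] d_def K_def)
qed

lemma is_channel_nonneg: "is_channel W \<Longrightarrow> 0 \<le> W x y"
  unfolding is_channel_def using is_dist_nonneg by blast

lemma is_channel_le_one: "is_channel W \<Longrightarrow> W x y \<le> 1"
  unfolding is_channel_def using is_dist_le_one by blast

lemma is_channel_ex_pos:
  assumes "is_channel W"
  obtains y where "0 < W x y"
  using assms unfolding is_channel_def by (meson is_dist_ex_pos)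

lemma ln_entry_bounded:
  fixes W :: "'x::finite \<Rightarrow> 'y::finite \<Rightarrow> real"
  obtains L where "0 \<le> L" "\<And>x y. 0 < W x y \<Longrightarrow> - L \<le> ln (W x y)"
proof
  show "0 \<le> (\<Sum>a\<in>UNIV. \<bar>ln (case_prod W a)\<bar>)" by (simp add: sum_nonneg)
  fix x y
  have "\<bar>ln (W x y)\<bar> \<le> (\<Sum>a\<in>UNIV. \<bar>ln (case_prod W a)\<bar>)"
    using member_le_sum[of "(x, y)" UNIV "\<lambda>a. \<bar>ln (case_prod W a)\<bar>"] by simp
  then show "- (\<Sum>a\<in>UNIV. \<bar>ln (case_prod W a)\<bar>) \<le> ln (W x y)" by linarith
qed

definition shared_outputs :: "('x::finite \<Rightarrow> 'y::finite \<Rightarrow> real) \<Rightarrow> ('x \<Rightarrow> real) \<Rightarrow> 'y set" where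
  "shared_outputs W P = {y. \<forall>x. 0 < P x \<longrightarrow> 0 < W x y}"

definition mean_log :: "('x::finite \<Rightarrow> 'y::finite \<Rightarrow> real) \<Rightarrow> ('x \<Rightarrow> real) \<Rightarrow> 'y \<Rightarrow> real" where
  "mean_log W P y = (\<Sum>x\<in>UNIV. P x * ln (W x y))"

definition geom_mass :: "('x::finite \<Rightarrow> 'y::finite \<Rightarrow> real) \<Rightarrow> ('x \<Rightarrow> real) \<Rightarrow> real" where
  "geom_mass W P = (\<Sum>y\<in>shared_outputs W P. exp (mean_log W P y))"

definition geom_output :: "('x::finite \<Rightarrow> 'y::finite \<Rightarrow> real) \<Rightarrow> ('x \<Rightarrow> real) \<Rightarrow> 'y \<Rightarrow> real" where
  "geom_output W P y =
    (if y \<in> shared_outputs W P then exp (mean_log W P y) / geom_mass W P else 0)"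

definition KL_min :: "('x::finite \<Rightarrow> 'y::finite \<Rightarrow> real) \<Rightarrow> ('x \<Rightarrow> real) \<Rightarrow> ereal" where
  "KL_min W P = (if shared_outputs W P = {} then \<infinity> else ereal (- ln (geom_mass W P)))"

lemma geom_mass_pos: "shared_outputs W P \<noteq> {} \<Longrightarrow> 0 < geom_mass W P"
  unfolding geom_mass_def by (intro sum_pos) auto

lemma mean_log_bounds:
  assumes W: "is_channel W" and P: "is_dist P" and y: "y \<in> shared_outputs W P"
    and L: "\<And>x y. 0 < W x y \<Longrightarrow> - L \<le> ln (W x y)"
  shows "- L \<le> mean_log W P y" "mean_log W P y \<le> 0"
proof -
  have "P x * - L \<le> P x * ln (W x y) \<and> P x * ln (W x y) \<le> 0" for x
  proof (cases "P x = 0")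
    case False
    then have "0 < P x" "0 < W x y" using y is_dist_nonneg[OF P, of x] by (auto simp: shared_outputs_def)
    then show ?thesis
      using mult_left_mono[OF L[of x y], of "P x"] is_channel_le_one[OF W, of x y]
      by (simp add: mult_nonneg_nonpos)
  qed simp
  then have "(\<Sum>x\<in>UNIV. P x * - L) \<le> mean_log W P y" "mean_log W P y \<le> 0"
    unfolding mean_log_def by (auto intro: sum_mono sum_nonpos)
  then show "- L \<le> mean_log W P y" "mean_log W P y \<le> 0"
    by (simp_all add: sum_negf is_dist_sum[OF P] flip: sum_distrib_right)
qed

lemma geom_mass_bounds:
  fixes W :: "'x::finite \<Rightarrow> 'y::finite \<Rightarrow> real"
  assumes W: "is_channel W" and P: "is_dist P" and ne: "shared_outputs W P \<noteq> {}"
    and L: "\<And>x y. 0 < W x y \<Longrightarrow> - L \<le> ln (W x y)"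
  shows "- L \<le> ln (geom_mass W P)" "ln (geom_mass W P) \<le> ln (real CARD('y))"
proof -
  obtain y0 where y0: "y0 \<in> shared_outputs W P" using ne by blast
  have "exp (- L) \<le> exp (mean_log W P y0)" using mean_log_bounds(1)[OF W P y0 L] by simp
  also have "\<dots> \<le> geom_mass W P" unfolding geom_mass_def using y0 by (intro member_le_sum) auto
  finally show "- L \<le> ln (geom_mass W P)" using geom_mass_pos[OF ne] by (simp add: ln_ge_iff)
  have "geom_mass W P \<le> (\<Sum>y\<in>shared_outputs W P. 1)"
    unfolding geom_mass_def using mean_log_bounds(2)[OF W P _ L] by (intro sum_mono) auto
  also have "\<dots> \<le> real CARD('y)" by (simp add: card_mono)
  finally show "ln (geom_mass W P) \<le> ln (real CARD('y))" using geom_mass_pos[OF ne] by simp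
qed

lemma joint_pos:
  assumes P: "is_dist P" and Q: "is_dist Q" and ac: "\<And>y. 0 < Q y \<Longrightarrow> y \<in> shared_outputs W P"
    and pos: "0 < prod_dist P Q a"
  shows "0 < joint P W a"
proof -
  obtain x y where a: "a = (x, y)" by fastforce
  then have "0 < P x" "0 < Q y"
    using pos is_dist_nonneg[OF P, of x] is_dist_nonneg[OF Q, of y]
    by (auto simp: prod_dist_def zero_less_mult_iff)
  then show ?thesis using ac a by (simp add: joint_def shared_outputs_def)
qed

lemma KL_prod_joint:
  fixes W :: "'x::finite \<Rightarrow> 'y::finite \<Rightarrow> real"
  assumes P: "is_dist P" and Q: "is_dist Q" and ac: "\<And>y. 0 < Q y \<Longrightarrow> y \<in> shared_outputs W P"
  shows "KL (prod_dist P Q) (joint P W) = ereal (\<Sum>y\<in>UNIV. Q y * (ln (Q y) - mean_log W P y))"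
proof -
  have summand: "prod_dist P Q (x, y) * ln (prod_dist P Q (x, y) / joint P W (x, y))
      = P x * Q y * (ln (Q y) - ln (W x y))" for x y
  proof (cases "0 < P x \<and> 0 < Q y")
    case True
    then have "0 < W x y" using ac by (auto simp: shared_outputs_def)
    then show ?thesis using True by (simp add: prod_dist_def joint_def ln_div)
  next
    case False
    then have "P x * Q y = 0" using is_dist_pos_iff[OF P] is_dist_pos_iff[OF Q] by auto
    then show ?thesis by (simp add: prod_dist_def)
  qed
  have "KL (prod_dist P Q) (joint P W) = ereal (\<Sum>x\<in>UNIV. \<Sum>y\<in>UNIV. P x * Q y * (ln (Q y) - ln (W x y)))"
    using joint_pos[OF P Q ac] by (simp add: KL_eq_sum sum_UNIV_prod summand)
  also have "\<dots> = ereal (\<Sum>y\<in>UNIV. \<Sum>x\<in>UNIV. P x * Q y * (ln (Q y) - ln (W x y)))"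
    by (subst sum.swap) (rule refl)
  also have "\<dots> = ereal (\<Sum>y\<in>UNIV. Q y * (ln (Q y) - mean_log W P y))"
  proof -
    have "(\<Sum>x\<in>UNIV. P x * Q y * (ln (Q y) - ln (W x y)))
        = Q y * ((\<Sum>x\<in>UNIV. P x) * ln (Q y) - mean_log W P y)" for y
      by (simp add: mean_log_def sum_distrib_left sum_distrib_right sum_subtractf algebra_simps)
    then show ?thesis by (simp add: is_dist_sum[OF P])
  qed
  finally show ?thesis .
qed

lemma KL_prod_joint_infinite:
  assumes W: "is_channel W" and Q: "0 < Q y" and y: "y \<notin> shared_outputs W P"
  shows "KL (prod_dist P Q) (joint P W) = \<infinity>"
proof -
  obtain x where "0 < P x" "\<not> 0 < W x y" using y by (auto simp: shared_outputs_def)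
  moreover have "0 \<le> W x y" by (rule is_channel_nonneg[OF W])
  ultimately have "0 < prod_dist P Q (x, y)" "\<not> 0 < joint P W (x, y)"
    using Q by (auto simp: prod_dist_def joint_def)
  then show ?thesis unfolding KL_def by auto
qed

lemma KL_prod_joint_ge:
  fixes W :: "'x::finite \<Rightarrow> 'y::finite \<Rightarrow> real"
  assumes W: "is_channel W" and P: "is_dist P" and Q: "is_dist Q"
  shows "ereal (- ln (geom_mass W P)) \<le> KL (prod_dist P Q) (joint P W)"
proof (cases "\<exists>y. 0 < Q y \<and> y \<notin> shared_outputs W P")
  case True
  then show ?thesis using KL_prod_joint_infinite[OF W] by auto
next
  case False
  then have ac: "\<And>y. 0 < Q y \<Longrightarrow> y \<in> shared_outputs W P" by blast
  define K where "K = (\<Sum>y\<in>UNIV. Q y * (ln (Q y) - mean_log W P y))"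
  have "exp (- K) = exp (\<Sum>y\<in>UNIV. Q y * (mean_log W P y - ln (Q y)))"
    by (simp add: K_def algebra_simps sum_subtractf)
  also have "\<dots> \<le> (\<Sum>y\<in>UNIV. Q y * exp (mean_log W P y - ln (Q y)))"
    using is_dist_nonneg[OF Q] is_dist_sum[OF Q] by (intro exp_sum_le_sum_exp) auto
  also have "\<dots> = (\<Sum>y\<in>shared_outputs W P. Q y * exp (mean_log W P y - ln (Q y)))"
    using ac is_dist_pos_iff[OF Q] by (intro sum.mono_neutral_right) auto
  also have "\<dots> \<le> geom_mass W P"
    unfolding geom_mass_def
  proof (intro sum_mono)
    fix y
    show "Q y * exp (mean_log W P y - ln (Q y)) \<le> exp (mean_log W P y)"
      using is_dist_pos_iff[OF Q, of y] by (cases "Q y = 0") (auto simp: exp_diff)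
  qed
  finally have "exp (- K) \<le> geom_mass W P" .
  moreover from this have "0 < geom_mass W P" using exp_gt_zero[of "- K"] by linarith
  ultimately have "- K \<le> ln (geom_mass W P)" by (simp add: ln_ge_iff)
  then show ?thesis using KL_prod_joint[OF P Q ac] by (simp add: K_def)
qed

lemma is_dist_geom_output:
  assumes W: "is_channel W" and P: "is_dist P" and ne: "shared_outputs W P \<noteq> {}"
  shows "is_dist (geom_output W P)"
proof -
  have S: "0 < geom_mass W P" using geom_mass_pos[OF ne] .
  have "(\<Sum>y\<in>UNIV. geom_output W P y) = (\<Sum>y\<in>shared_outputs W P. exp (mean_log W P y) / geom_mass W P)"
    unfolding geom_output_def by (intro sum.mono_neutral_cong_right) auto
  also have "\<dots> = 1" using S by (simp add: geom_mass_def flip: sum_divide_distrib)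
  finally show ?thesis unfolding is_dist_def using S by (simp add: geom_output_def)
qed

lemma KL_geom_output:
  assumes W: "is_channel W" and P: "is_dist P" and ne: "shared_outputs W P \<noteq> {}"
  shows "KL (prod_dist P (geom_output W P)) (joint P W) = ereal (- ln (geom_mass W P))"
proof -
  have S: "0 < geom_mass W P" using geom_mass_pos[OF ne] .
  have Q: "is_dist (geom_output W P)" by (rule is_dist_geom_output[OF W P ne])
  have ac: "\<And>y. 0 < geom_output W P y \<Longrightarrow> y \<in> shared_outputs W P"
    by (auto simp: geom_output_def split: if_splits)
  have "geom_output W P y * (ln (geom_output W P y) - mean_log W P y) = geom_output W P y * - ln (geom_mass W P)"
    for y using S by (simp add: geom_output_def ln_div)
  then have "(\<Sum>y\<in>UNIV. geom_output W P y * (ln (geom_output W P y) - mean_log W P y))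
      = (\<Sum>y\<in>UNIV. geom_output W P y) * - ln (geom_mass W P)"
    by (simp only: sum_distrib_right)
  then have "(\<Sum>y\<in>UNIV. geom_output W P y * (ln (geom_output W P y) - mean_log W P y)) = - ln (geom_mass W P)"
    by (simp add: is_dist_sum[OF Q])
  then show ?thesis by (simp add: KL_prod_joint[OF P Q ac])
qed

lemma INF_KL_prod_joint:
  assumes W: "is_channel W" and P: "is_dist P"
  shows "(INF Q\<in>{Q. is_dist Q}. KL (prod_dist P Q) (joint P W)) = KL_min W P"
proof (cases "shared_outputs W P = {}")
  case True
  have "KL (prod_dist P Q) (joint P W) = \<infinity>" if "is_dist Q" for Q
    using is_dist_ex_pos[OF that] KL_prod_joint_infinite[OF W] True by (metis empty_iff)
  then show ?thesis using True by (auto simp: KL_min_def intro!: antisym INF_greatest)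
next
  case False
  show ?thesis
  proof (rule antisym)
    show "(INF Q\<in>{Q. is_dist Q}. KL (prod_dist P Q) (joint P W)) \<le> KL_min W P"
      using False is_dist_geom_output[OF W P False] KL_geom_output[OF W P False]
      by (auto simp: KL_min_def intro!: INF_lower2)
    show "KL_min W P \<le> (INF Q\<in>{Q. is_dist Q}. KL (prod_dist P Q) (joint P W))"
      using False KL_prod_joint_ge[OF W P] by (auto simp: KL_min_def intro: INF_greatest)
  qed
qed

lemma U_eq_SUP_KL_min:
  assumes "is_channel W"
  shows "U W = (SUP P\<in>{P. is_dist P}. KL_min W P)"
  unfolding U_def using INF_KL_prod_joint[OF assms] by (intro SUP_cong) auto

lemma U_renyi_le_U:
  assumes "\<alpha> < 1"
  shows "U_renyi \<alpha> W \<le> U W"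
  unfolding U_renyi_def U_def
  by (intro SUP_subset_mono INF_superset_mono order.refl renyi_le_KL[OF is_dist_prod_dist assms]) auto

lemma U_le_U_renyi:
  assumes "1 < \<alpha>"
  shows "U W \<le> U_renyi \<alpha> W"
  unfolding U_renyi_def U_def
  by (intro SUP_subset_mono INF_superset_mono order.refl KL_le_renyi[OF is_dist_prod_dist assms]) auto

definition power_mean :: "('x::finite \<Rightarrow> 'y::finite \<Rightarrow> real) \<Rightarrow> ('x \<Rightarrow> real) \<Rightarrow> real \<Rightarrow> 'y \<Rightarrow> real" where
  "power_mean W P b y = (\<Sum>x\<in>UNIV. P x * W x y powr b)"

definition power_mean_mass :: "('x::finite \<Rightarrow> 'y::finite \<Rightarrow> real) \<Rightarrow> ('x \<Rightarrow> real) \<Rightarrow> real \<Rightarrow> real" where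
  "power_mean_mass W P b = (\<Sum>y\<in>UNIV. power_mean W P b y powr (1 / b))"

lemma power_mean_nonneg: "is_dist P \<Longrightarrow> 0 \<le> power_mean W P b y"
  unfolding power_mean_def by (simp add: sum_nonneg is_dist_nonneg)

lemma power_mean_mass_pos:
  assumes W: "is_channel W" and P: "is_dist P"
  shows "0 < power_mean_mass W P b"
proof -
  obtain x where x: "0 < P x" using is_dist_ex_pos[OF P] .
  obtain y where y: "0 < W x y" using is_channel_ex_pos[OF W] .
  have "0 < P x * W x y powr b" using x y by simp
  also have "\<dots> \<le> power_mean W P b y"
    unfolding power_mean_def by (rule member_le_sum) (auto simp: is_dist_nonneg[OF P])
  finally have "0 < power_mean W P b y powr (1 / b)" by simp
  also have "\<dots> \<le> power_mean_mass W P b"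
    unfolding power_mean_mass_def by (rule member_le_sum) auto
  finally show ?thesis .
qed

lemma renyi_sum_prod_joint:
  assumes W: "is_channel W" and P: "is_dist P" and Q: "is_dist Q"
  shows "(\<Sum>a\<in>{a. 0 < prod_dist P Q a}. prod_dist P Q a powr \<alpha> * joint P W a powr (1 - \<alpha>))
    = (\<Sum>y\<in>UNIV. Q y powr \<alpha> * power_mean W P (1 - \<alpha>) y)"
proof -
  have summand: "prod_dist P Q (x, y) powr \<alpha> * joint P W (x, y) powr (1 - \<alpha>)
      = P x * (Q y powr \<alpha> * W x y powr (1 - \<alpha>))" for x y
  proof (cases "P x = 0")
    case False
    then have "P x powr \<alpha> * P x powr (1 - \<alpha>) = P x"
      using is_dist_nonneg[OF P, of x] by (simp flip: powr_add)
    moreover have "prod_dist P Q (x, y) powr \<alpha> * joint P W (x, y) powr (1 - \<alpha>)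
        = (P x powr \<alpha> * P x powr (1 - \<alpha>)) * (Q y powr \<alpha> * W x y powr (1 - \<alpha>))"
      using is_dist_nonneg[OF P, of x] is_dist_nonneg[OF Q, of y] is_channel_nonneg[OF W, of x y]
      by (simp add: prod_dist_def joint_def powr_mult mult_ac)
    ultimately show ?thesis by simp
  qed (simp add: prod_dist_def joint_def)
  have "(\<Sum>a\<in>{a. 0 < prod_dist P Q a}. prod_dist P Q a powr \<alpha> * joint P W a powr (1 - \<alpha>))
      = (\<Sum>a\<in>UNIV. prod_dist P Q a powr \<alpha> * joint P W a powr (1 - \<alpha>))"
    using is_dist_pos_iff[OF is_dist_prod_dist[OF P Q]] by (intro sum.mono_neutral_left) auto
  also have "\<dots> = (\<Sum>x\<in>UNIV. \<Sum>y\<in>UNIV. P x * (Q y powr \<alpha> * W x y powr (1 - \<alpha>)))"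
    by (simp add: sum_UNIV_prod summand)
  also have "\<dots> = (\<Sum>y\<in>UNIV. \<Sum>x\<in>UNIV. P x * (Q y powr \<alpha> * W x y powr (1 - \<alpha>)))"
    by (rule sum.swap)
  also have "\<dots> = (\<Sum>y\<in>UNIV. Q y powr \<alpha> * power_mean W P (1 - \<alpha>) y)"
    by (simp add: power_mean_def sum_distrib_left algebra_simps)
  finally show ?thesis .
qed

lemma renyi_prod_joint_ge_power_mean_mass:
  assumes W: "is_channel W" and P: "is_dist P" and Q: "is_dist Q" and \<alpha>: "0 < \<alpha>" "\<alpha> < 1"
  shows "ereal (- ln (power_mean_mass W P (1 - \<alpha>))) \<le> renyi \<alpha> (prod_dist P Q) (joint P W)"
proof -
  define b where "b = 1 - \<alpha>"
  have b: "0 < b" "b < 1" using \<alpha> by (auto simp: b_def)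
  define s where "s = (\<Sum>a\<in>{a. 0 < prod_dist P Q a}. prod_dist P Q a powr \<alpha> * joint P W a powr (1 - \<alpha>))"
  define T where "T = power_mean_mass W P b"
  have "s = (\<Sum>y\<in>UNIV. Q y powr (1 - b) * (power_mean W P b y powr (1 / b)) powr b)"
    using b power_mean_nonneg[OF P]
    by (simp add: s_def renyi_sum_prod_joint[OF W P Q] powr_powr b_def abs_of_nonneg[OF power_mean_nonneg[OF P]])
  also have "\<dots> \<le> T powr b"
    unfolding T_def power_mean_mass_def
    using is_dist_nonneg[OF Q] is_dist_sum[OF Q] b by (intro sum_powr_mult_le_sum_powr) auto
  finally have sT: "s \<le> T powr b" .
  show ?thesis
  proof (cases "s = 0")
    case True
    then show ?thesis using \<alpha> unfolding renyi_def Let_def s_def by simp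
  next
    case False
    have "0 \<le> s" unfolding s_def by (intro sum_nonneg) auto
    then have s: "0 < s" using False by simp
    have "0 \<le> T" unfolding T_def power_mean_mass_def by (simp add: sum_nonneg)
    moreover have "T \<noteq> 0" using sT s by auto
    ultimately have T: "0 < T" by simp
    have "ln s \<le> ln (T powr b)" by (rule iffD2[OF ln_le_cancel_iff]) (use s sT in auto)
    also have "\<dots> = b * ln T" using T by (simp add: ln_powr)
    finally have "ln s \<le> b * ln T" .
    then have "- ln T \<le> ln s / (\<alpha> - 1)" using b by (simp add: b_def neg_le_divide_eq algebra_simps)
    then show ?thesis using \<alpha> False unfolding renyi_def Let_def s_def T_def b_def by simp
  qed
qed

lemma power_mean_powr_le_shared:
  assumes W: "is_channel W" and P: "is_dist P" and y: "y \<in> shared_outputs W P"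
    and L: "\<And>x y. 0 < W x y \<Longrightarrow> - L \<le> ln (W x y)" and b: "0 < b" "b * L \<le> 1"
  shows "power_mean W P b y powr (1 / b) \<le> exp (b * L\<^sup>2) * exp (mean_log W P y)"
proof -
  have W_pos: "0 < W x y" if "0 < P x" for x using y that by (auto simp: shared_outputs_def)
  have summand: "P x * W x y powr b = P x * exp (b * ln (W x y))" for x
    using W_pos[of x] is_dist_pos_iff[OF P, of x] by (cases "P x = 0") (auto simp: powr_def mult.commute)
  then have "power_mean W P b y = (\<Sum>x\<in>UNIV. P x * exp (b * ln (W x y)))"
    by (simp only: power_mean_def summand)
  also have "ln \<dots> \<le> b * mean_log W P y + b\<^sup>2 * L\<^sup>2"
    unfolding mean_log_def
  proof (rule ln_sum_exp_le_quadratic)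
    show "\<bar>ln (W x y)\<bar> \<le> L" if "0 < P x" for x
      using L[OF W_pos[OF that]] is_channel_le_one[OF W, of x y] W_pos[OF that] by simp
  qed (use is_dist_nonneg[OF P] is_dist_sum[OF P] b in auto)
  finally have "ln (power_mean W P b y) / b \<le> mean_log W P y + b * L\<^sup>2"
    using b by (simp add: pos_divide_le_eq power2_eq_square algebra_simps)
  then show ?thesis
    using power_mean_nonneg[OF P, of W b y] by (auto simp: powr_def exp_add[symmetric] mult.commute)
qed

lemma power_mean_powr_le_unshared:
  assumes W: "is_channel W" and P: "is_dist P" and y: "y \<notin> shared_outputs W P" and b: "0 < b"
  shows "power_mean W P b y powr (1 / b) \<le> b / - ln (\<Sum>x | 0 < W x y. P x)"
proof -
  define c where "c = (\<Sum>x | 0 < W x y. P x)"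
  have c_eq: "c = (\<Sum>x\<in>UNIV. if 0 < W x y then P x else 0)"
    unfolding c_def by (simp add: sum.inter_filter[symmetric])
  have "power_mean W P b y \<le> c"
    unfolding power_mean_def c_eq
  proof (rule sum_mono)
    fix x
    have "W x y powr b \<le> 1" if "0 < W x y"
      using that is_channel_le_one[OF W] b by (intro powr_le1) auto
    then show "P x * W x y powr b \<le> (if 0 < W x y then P x else 0)"
      using is_dist_nonneg[OF P, of x] is_channel_nonneg[OF W, of x y]
      by (auto simp: mult_left_le)
  qed
  obtain x0 where x0: "0 < P x0" "\<not> 0 < W x0 y" using y by (auto simp: shared_outputs_def)
  have "c + P x0 = (\<Sum>x\<in>UNIV. (if 0 < W x y then P x else 0) + (if x = x0 then P x else 0))"
    by (simp add: c_eq sum.distrib)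
  also have "\<dots> \<le> (\<Sum>x\<in>UNIV. P x)"
    using x0 is_dist_nonneg[OF P] by (intro sum_mono) auto
  finally have "c < 1" using x0 is_dist_sum[OF P] by simp
  have "0 \<le> c" unfolding c_def by (simp add: sum_nonneg is_dist_nonneg[OF P])
  have "c powr (1 / b) \<le> b / - ln c" by (rule powr_inverse_le_div_neg_ln[OF \<open>0 \<le> c\<close> \<open>c < 1\<close> b])
  moreover have "power_mean W P b y powr (1 / b) \<le> c powr (1 / b)"
    using \<open>power_mean W P b y \<le> c\<close> power_mean_nonneg[OF P] b by (intro powr_mono2) auto
  ultimately show ?thesis by (simp add: c_def)
qed

lemma power_mean_mass_le:
  assumes W: "is_channel W" and P: "is_dist P"
    and L: "\<And>x y. 0 < W x y \<Longrightarrow> - L \<le> ln (W x y)" and b: "0 < b" "b * L \<le> 1"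
  shows "power_mean_mass W P b \<le> exp (b * L\<^sup>2) * geom_mass W P
    + b * (\<Sum>y\<in>- shared_outputs W P. 1 / - ln (\<Sum>x | 0 < W x y. P x))"
proof -
  have "power_mean_mass W P b = (\<Sum>y\<in>shared_outputs W P. power_mean W P b y powr (1 / b))
      + (\<Sum>y\<in>- shared_outputs W P. power_mean W P b y powr (1 / b))"
    unfolding power_mean_mass_def
    by (simp add: sum.subset_diff[of "shared_outputs W P" UNIV] Compl_eq_Diff_UNIV)
  also have "\<dots> \<le> (\<Sum>y\<in>shared_outputs W P. exp (b * L\<^sup>2) * exp (mean_log W P y))
      + (\<Sum>y\<in>- shared_outputs W P. b * (1 / - ln (\<Sum>x | 0 < W x y. P x)))"
    using power_mean_powr_le_shared[OF W P _ L b] power_mean_powr_le_unshared[OF W P _ b(1)]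
    by (intro add_mono sum_mono) auto
  finally show ?thesis by (simp add: geom_mass_def sum_distrib_left)
qed

lemma eventually_less_U_renyi_at_left:
  assumes W: "is_channel W" and P: "is_dist P"
    and r: "ereal r < KL_min W P"
  shows "eventually (\<lambda>\<alpha>. ereal r < U_renyi \<alpha> W) (at_left 1)"
proof -
  obtain L where L: "\<And>x y. 0 < W x y \<Longrightarrow> - L \<le> ln (W x y)" using ln_entry_bounded by blast
  define K where "K = (\<Sum>y\<in>- shared_outputs W P. 1 / - ln (\<Sum>x | 0 < W x y. P x))"
  define bound where "bound \<alpha> = exp ((1 - \<alpha>) * L\<^sup>2) * geom_mass W P + (1 - \<alpha>) * K" for \<alpha>
  have "geom_mass W P < exp (- r)"
  proof (cases "shared_outputs W P = {}")
    case False
    then have "0 < geom_mass W P" "ln (geom_mass W P) < - r"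
      using geom_mass_pos[OF False] r by (auto simp: KL_min_def)
    then show ?thesis by (metis exp_less_mono exp_ln)
  qed (simp add: geom_mass_def)
  moreover have "(bound \<longlongrightarrow> exp ((1 - 1) * L\<^sup>2) * geom_mass W P + (1 - 1) * K) (at_left 1)"
    unfolding bound_def by (intro tendsto_intros)
  ultimately have "eventually (\<lambda>\<alpha>. bound \<alpha> < exp (- r)) (at_left 1)"
    by (intro order_tendstoD(2)) auto
  moreover have "((\<lambda>\<alpha>. (1 - \<alpha>) * L) \<longlongrightarrow> (1 - 1) * L) (at_left 1)" by (intro tendsto_intros)
  then have "eventually (\<lambda>\<alpha>. (1 - \<alpha>) * L < 1) (at_left 1)" by (intro order_tendstoD(2)) auto
  moreover have "eventually (\<lambda>\<alpha>. \<alpha> \<in> {0<..<1}) (at_left (1::real))" by (rule eventually_at_left_real) simp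
  ultimately show ?thesis
  proof eventually_elim
    case (elim \<alpha>)
    then have \<alpha>: "0 < \<alpha>" "\<alpha> < 1" by auto
    define T where "T = power_mean_mass W P (1 - \<alpha>)"
    have "T \<le> bound \<alpha>"
      unfolding T_def bound_def K_def using elim by (intro power_mean_mass_le[OF W P L]) auto
    then have "ln T < - r"
      using elim power_mean_mass_pos[OF W P] by (metis T_def exp_less_cancel_iff exp_ln le_less_trans)
    then have "ereal r < ereal (- ln T)" by simp
    also have "\<dots> \<le> (INF Q\<in>{Q. is_dist Q}. renyi \<alpha> (prod_dist P Q) (joint P W))"
      unfolding T_def using renyi_prod_joint_ge_power_mean_mass[OF W P _ \<alpha>] by (auto intro: INF_greatest)
    also have "\<dots> \<le> U_renyi \<alpha> W" unfolding U_renyi_def using P by (intro SUP_upper) auto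
    finally show ?case .
  qed
qed

lemma tendsto_U_renyi_at_left:
  assumes W: "is_channel W"
  shows "((\<lambda>\<alpha>. U_renyi \<alpha> W) \<longlongrightarrow> U W) (at_left 1)"
proof (rule order_tendstoI)
  fix a assume "a < U W"
  then obtain r where r: "a < ereal r" "ereal r < U W" using ereal_dense2 by blast
  then obtain P where "is_dist P"
    "ereal r < KL_min W P"
    unfolding U_eq_SUP_KL_min[OF W] less_SUP_iff by auto
  from eventually_less_U_renyi_at_left[OF W this] show "eventually (\<lambda>\<alpha>. a < U_renyi \<alpha> W) (at_left 1)"
    by eventually_elim (use r in auto)
next
  fix b assume "U W < b"
  have "eventually (\<lambda>\<alpha>. \<alpha> < 1) (at_left (1::real))" by (rule eventually_at_leftI[of 0]) auto
  then show "eventually (\<lambda>\<alpha>. U_renyi \<alpha> W < b) (at_left 1)"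
    by eventually_elim (use \<open>U W < b\<close> U_renyi_le_U in \<open>meson le_less_trans\<close>)
qed

lemma abs_ln_geom_output_div_le:
  fixes W :: "'x::finite \<Rightarrow> 'y::finite \<Rightarrow> real"
  assumes W: "is_channel W" and P: "is_dist P" and ne: "shared_outputs W P \<noteq> {}"
    and L: "0 \<le> L" "\<And>x y. 0 < W x y \<Longrightarrow> - L \<le> ln (W x y)"
    and x: "0 < P x" and y: "0 < geom_output W P y"
  shows "\<bar>ln (geom_output W P y / W x y)\<bar> \<le> 2 * L + ln (real CARD('y))"
proof -
  have y_shared: "y \<in> shared_outputs W P" using y by (auto simp: geom_output_def split: if_splits)
  then have Wxy: "0 < W x y" using x by (auto simp: shared_outputs_def)
  have S: "0 < geom_mass W P" "- L \<le> ln (geom_mass W P)" "ln (geom_mass W P) \<le> ln (real CARD('y))"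
    using geom_mass_pos[OF ne] geom_mass_bounds[OF W P ne L(2)] by auto
  have "ln (geom_output W P y / W x y) = mean_log W P y - ln (geom_mass W P) - ln (W x y)"
    using y_shared S(1) Wxy by (simp add: geom_output_def ln_div ln_mult)
  moreover have "- L \<le> mean_log W P y" "mean_log W P y \<le> 0"
    using mean_log_bounds[OF W P y_shared L(2)] by auto
  moreover have "- L \<le> ln (W x y)" "ln (W x y) \<le> 0"
    using L(2)[OF Wxy] is_channel_le_one[OF W, of x y] Wxy by auto
  moreover have "0 \<le> ln (real CARD('y))" by simp
  ultimately show ?thesis using S L(1) unfolding abs_le_iff by (intro conjI) linarith+
qed

lemma renyi_geom_output_le:
  fixes W :: "'x::finite \<Rightarrow> 'y::finite \<Rightarrow> real"
  assumes W: "is_channel W" and P: "is_dist P" and ne: "shared_outputs W P \<noteq> {}"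
    and L: "0 \<le> L" "\<And>x y. 0 < W x y \<Longrightarrow> - L \<le> ln (W x y)"
    and \<alpha>: "1 < \<alpha>" "(\<alpha> - 1) * (2 * L + ln (real CARD('y))) \<le> 1"
  shows "renyi \<alpha> (prod_dist P (geom_output W P)) (joint P W)
    \<le> ereal (- ln (geom_mass W P) + (\<alpha> - 1) * (2 * L + ln (real CARD('y)))\<^sup>2)"
proof -
  have Q: "is_dist (geom_output W P)" by (rule is_dist_geom_output[OF W P ne])
  have ac: "\<And>y. 0 < geom_output W P y \<Longrightarrow> y \<in> shared_outputs W P"
    by (auto simp: geom_output_def split: if_splits)
  have "\<bar>ln (prod_dist P (geom_output W P) a / joint P W a)\<bar> \<le> 2 * L + ln (real CARD('y))"
    if "0 < prod_dist P (geom_output W P) a" for a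
  proof -
    obtain x y where a: "a = (x, y)" by fastforce
    then have "0 < P x" "0 < geom_output W P y"
      using that is_dist_nonneg[OF P, of x] is_dist_nonneg[OF Q, of y]
      by (auto simp: prod_dist_def zero_less_mult_iff)
    then show ?thesis
      using abs_ln_geom_output_div_le[OF W P ne L] by (simp add: a prod_dist_def joint_def)
  qed
  then have "renyi \<alpha> (prod_dist P (geom_output W P)) (joint P W)
      \<le> KL (prod_dist P (geom_output W P)) (joint P W) + ereal ((\<alpha> - 1) * (2 * L + ln (real CARD('y)))\<^sup>2)"
    using joint_pos[OF P Q ac] \<alpha> by (intro renyi_le_KL_add_quadratic is_dist_prod_dist[OF P Q]) auto
  then show ?thesis by (simp add: KL_geom_output[OF W P ne])
qed

lemma U_renyi_le_add_quadratic:
  fixes W :: "'x::finite \<Rightarrow> 'y::finite \<Rightarrow> real"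
  assumes W: "is_channel W" and ne: "\<And>P. is_dist P \<Longrightarrow> shared_outputs W P \<noteq> {}"
    and u: "U W \<le> ereal u" and L: "0 \<le> L" "\<And>x y. 0 < W x y \<Longrightarrow> - L \<le> ln (W x y)"
    and \<alpha>: "1 < \<alpha>" "(\<alpha> - 1) * (2 * L + ln (real CARD('y))) \<le> 1"
  shows "U_renyi \<alpha> W \<le> ereal (u + (\<alpha> - 1) * (2 * L + ln (real CARD('y)))\<^sup>2)"
  unfolding U_renyi_def
proof (rule SUP_least)
  fix P :: "'x \<Rightarrow> real"
  assume "P \<in> {P. is_dist P}"
  then have P: "is_dist P" by simp
  have "ereal (- ln (geom_mass W P)) \<le> U W"
    using ne[OF P] P unfolding U_eq_SUP_KL_min[OF W] by (intro SUP_upper2[of P]) (auto simp: KL_min_def)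
  then have "- ln (geom_mass W P) \<le> u" using u by (metis ereal_less_eq(3) order.trans)
  have "(INF Q\<in>{Q. is_dist Q}. renyi \<alpha> (prod_dist P Q) (joint P W))
      \<le> renyi \<alpha> (prod_dist P (geom_output W P)) (joint P W)"
    using is_dist_geom_output[OF W P ne[OF P]] by (intro INF_lower) simp
  also have "\<dots> \<le> ereal (- ln (geom_mass W P) + (\<alpha> - 1) * (2 * L + ln (real CARD('y)))\<^sup>2)"
    by (rule renyi_geom_output_le[OF W P ne[OF P] L \<alpha>])
  also have "\<dots> \<le> ereal (u + (\<alpha> - 1) * (2 * L + ln (real CARD('y)))\<^sup>2)"
    using \<open>- ln (geom_mass W P) \<le> u\<close> by simp
  finally show "(INF Q\<in>{Q. is_dist Q}. renyi \<alpha> (prod_dist P Q) (joint P W))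
      \<le> ereal (u + (\<alpha> - 1) * (2 * L + ln (real CARD('y)))\<^sup>2)" .
qed

lemma tendsto_U_renyi_at_right:
  fixes W :: "'x::finite \<Rightarrow> 'y::finite \<Rightarrow> real"
  assumes W: "is_channel W"
  shows "((\<lambda>\<alpha>. U_renyi \<alpha> W) \<longlongrightarrow> U W) (at_right 1)"
proof (rule order_tendstoI)
  fix a assume "a < U W"
  have "eventually (\<lambda>\<alpha>. 1 < \<alpha>) (at_right (1::real))" by (rule eventually_at_right_less)
  then show "eventually (\<lambda>\<alpha>. a < U_renyi \<alpha> W) (at_right 1)"
    by eventually_elim (use \<open>a < U W\<close> U_le_U_renyi in \<open>meson less_le_trans\<close>)
next
  fix b assume Ub: "U W < b"
  have ne: "shared_outputs W P \<noteq> {}" if P: "is_dist P" for P :: "'x \<Rightarrow> real"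
  proof
    assume "shared_outputs W P = {}"
    then have "\<infinity> \<le> U W"
      using P unfolding U_eq_SUP_KL_min[OF W] by (intro SUP_upper2[of P]) (auto simp: KL_min_def)
    then show False using Ub by simp
  qed
  have "ereal (- ln (geom_mass W (\<lambda>_. 1 / real CARD('x)))) \<le> U W"
    using ne[OF is_dist_uniform] is_dist_uniform
    unfolding U_eq_SUP_KL_min[OF W] by (intro SUP_upper2) (auto simp: KL_min_def)
  then obtain u where u: "U W = ereal u" using Ub by (cases "U W") auto
  obtain L where L: "0 \<le> L" "\<And>x y. 0 < W x y \<Longrightarrow> - L \<le> ln (W x y)" using ln_entry_bounded by blast
  define B where "B = 2 * L + ln (real CARD('y))"
  have "((\<lambda>\<alpha>. (\<alpha> - 1) * B) \<longlongrightarrow> (1 - 1) * B) (at_right 1)" by (intro tendsto_intros)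
  then have "eventually (\<lambda>\<alpha>. (\<alpha> - 1) * B < 1) (at_right 1)" by (intro order_tendstoD(2)) auto
  moreover have "((\<lambda>\<alpha>. ereal (u + (\<alpha> - 1) * B\<^sup>2)) \<longlongrightarrow> ereal (u + (1 - 1) * B\<^sup>2)) (at_right 1)"
    by (intro tendsto_intros)
  then have "eventually (\<lambda>\<alpha>. ereal (u + (\<alpha> - 1) * B\<^sup>2) < b) (at_right 1)"
    using Ub u by (intro order_tendstoD(2)) auto
  moreover have "eventually (\<lambda>\<alpha>. 1 < \<alpha>) (at_right (1::real))" by (rule eventually_at_right_less)
  ultimately show "eventually (\<lambda>\<alpha>. U_renyi \<alpha> W < b) (at_right 1)"
  proof eventually_elim
    case (elim \<alpha>)
    then have "U_renyi \<alpha> W \<le> ereal (u + (\<alpha> - 1) * B\<^sup>2)"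
      unfolding B_def using u ne L by (intro U_renyi_le_add_quadratic[OF W]) auto
    then show ?case using elim by (meson le_less_trans)
  qed
qed

theorem mainTheorem14:
  fixes W :: "'x::finite \<Rightarrow> 'y::finite \<Rightarrow> real"
  assumes "is_channel W"
  shows "((\<lambda>\<alpha>. U_renyi \<alpha> W) \<longlongrightarrow> U W) (at_left 1)
     \<and> ((\<lambda>\<alpha>. U_renyi \<alpha> W) \<longlongrightarrow> U W) (at_right 1)"
  using tendsto_U_renyi_at_left[OF assms] tendsto_U_renyi_at_right[OF assms] ..

end
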